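(* Let $\psi(x,y)=\binom{x}{y}$. For every $L\in\mathcal F_x(\psi)$ there is a unique difference operator $R(y,\delta_y)$ with $L\cdot\psi=R\cdot\psi$, and the resulting map $b_\psi:\mathcal F_x(\psi)\to\mathcal F_y(\psi)$, $b_\psi(L)=R$, is a well-defined bijective linear map satisfying $b_\psi(L_1L_2)=b_\psi(L_2)b_\psi(L_1)$ for all $L_1,L_2\in\mathcal F_x(\psi)$; i.e. $b_\psi$ is an algebra anti-isomorphism.
   Context: $\mathbb N=\{0,1,2,\dots\}$; functions on $\mathbb N$ are extended by $0$ to negative arguments. Shifts: $(\delta_x f)(x)=f(x+1)$, $(\delta_x^* f)(x)=f(x-1)$. A difference operator in $x$ is a finite expression $L=\sum_{k=0}^n a_k(x)\delta_x^k+\sum_{k=1}^n a_{-k}(x)(\delta_x^k)^*$ with $a_k:\mathbb N\to\mathbb R$, acting by $(L f)(x)=\sum_{k=-n}^n a_k(x)f(x+k)$; these form an algebra under composition; similarly in $y$. Operators in $x$ act on $\psi(x,y)$ for fixed $y$, operators in $y$ for fixed $x$. The left and right Fourier algebras are $\mathcal F_x(\psi)=\{L(x,\delta_x):\ L\cdot\psi=R\cdot\psi \text{ for some difference operator } R(y,\delta_y)\}$ and $\mathcal F_y(\psi)=\{R(y,\delta_y):\ L\cdot\psi=R\cdot\psi\text{ for some difference operator } L(x,\delta_x)\}$. *)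

theory Defs
  imports Complex_Main
begin

definition ext0 :: "(nat \<Rightarrow> real) \<Rightarrow> int \<Rightarrow> real" where
  "ext0 f i = (if i < 0 then 0 else f (nat i))"

text \<open>Difference operators are identified with
  their action on functions N -> R (this is how they compose).\<close>
definition diff_op_action :: "nat \<Rightarrow> (int \<Rightarrow> nat \<Rightarrow> real) \<Rightarrow> (nat \<Rightarrow> real) \<Rightarrow> nat \<Rightarrow> real" where
  "diff_op_action n a f x = (\<Sum>k\<in>{-int n..int n}. a k x * ext0 f (int x + k))"

definition diff_ops :: "((nat \<Rightarrow> real) \<Rightarrow> (nat \<Rightarrow> real)) set" where
  "diff_ops = {L. \<exists>n a. L = diff_op_action n a}"

definition psi :: "nat \<Rightarrow> nat \<Rightarrow> real" where
  "psi x y = real (x choose y)"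

definition intertwines :: "((nat \<Rightarrow> real) \<Rightarrow> (nat \<Rightarrow> real)) \<Rightarrow> ((nat \<Rightarrow> real) \<Rightarrow> (nat \<Rightarrow> real)) \<Rightarrow> bool" where
  "intertwines L R \<longleftrightarrow> (\<forall>x y. L (\<lambda>x'. psi x' y) x = R (\<lambda>y'. psi x y') y)"

definition Fx :: "((nat \<Rightarrow> real) \<Rightarrow> (nat \<Rightarrow> real)) set" where
  "Fx = {L \<in> diff_ops. \<exists>R \<in> diff_ops. intertwines L R}"

definition Fy :: "((nat \<Rightarrow> real) \<Rightarrow> (nat \<Rightarrow> real)) set" where
  "Fy = {R \<in> diff_ops. \<exists>L \<in> diff_ops. intertwines L R}"

definition b_psi :: "((nat \<Rightarrow> real) \<Rightarrow> (nat \<Rightarrow> real)) \<Rightarrow> ((nat \<Rightarrow> real) \<Rightarrow> (nat \<Rightarrow> real))" where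
  "b_psi L = (THE R. R \<in> diff_ops \<and> intertwines L R)"

definition op_add :: "((nat \<Rightarrow> real) \<Rightarrow> (nat \<Rightarrow> real)) \<Rightarrow> ((nat \<Rightarrow> real) \<Rightarrow> (nat \<Rightarrow> real)) \<Rightarrow> ((nat \<Rightarrow> real) \<Rightarrow> (nat \<Rightarrow> real))" where
  "op_add L1 L2 = (\<lambda>f x. L1 f x + L2 f x)"

definition op_scale :: "real \<Rightarrow> ((nat \<Rightarrow> real) \<Rightarrow> (nat \<Rightarrow> real)) \<Rightarrow> ((nat \<Rightarrow> real) \<Rightarrow> (nat \<Rightarrow> real))" where
  "op_scale c L = (\<lambda>f x. c * L f x)"

end

theory Submission
  imports Defs
begin

text \<open>A difference operator is determined by its values on a family of functions whose
  finitely supported linear relations are trivial, and both the rows \<open>y \<mapsto> (x choose y)\<close> and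
  the columns \<open>x \<mapsto> (x choose y)\<close> of the binomial matrix form such a family, being
  triangular with unit diagonal.  Hence the partner of an operator in an intertwining relation
  is unique on either side, so \<open>b_psi\<close> is well defined and injective.  Intertwining is
  compatible with sums and scalar multiples, and applying \<open>L\<^sub>1 L\<^sub>2\<close> to \<open>psi\<close> lets
  \<open>R\<^sub>2\<close> act first and \<open>R\<^sub>1\<close> second, which reverses the order of composition.\<close>

lemma diff_op_action_in_diff_ops: "diff_op_action n a \<in> diff_ops"
  unfolding diff_ops_def by blast

text \<open>The truncated subtraction in \<open>x - n\<close> is what realises the zero extension to negative arguments.\<close>

lemma diff_op_action_window:
  "diff_op_action n a f x = (\<Sum>j\<in>{x - n..x + n}. a (int j - int x) x * f j)"
proof -
  have "diff_op_action n a f x = (\<Sum>k\<in>{k\<in>{-int n..int n}. 0 \<le> int x + k}. a k x * f (nat (int x + k)))"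
    unfolding diff_op_action_def ext0_def by (subst sum.inter_filter) (auto intro: sum.cong)
  also have "\<dots> = (\<Sum>j\<in>{x - n..x + n}. a (int j - int x) x * f j)"
    by (rule sum.reindex_bij_witness[where i = "\<lambda>j. int j - int x" and j = "\<lambda>k. nat (int x + k)"]) auto
  finally show ?thesis .
qed

lemma diff_op_action_pad:
  assumes "n \<le> N"
  shows "diff_op_action n a = diff_op_action N (\<lambda>k x. if k \<in> {-int n..int n} then a k x else 0)"
proof (intro ext)
  fix f x
  have "{-int N..int N} \<inter> {-int n..int n} = {-int n..int n}" using assms by auto
  then have "diff_op_action n a f x
      = (\<Sum>k\<in>{-int N..int N}. if k \<in> {-int n..int n} then a k x * ext0 f (int x + k) else 0)"
    unfolding diff_op_action_def by (simp only: sum.inter_restrict[symmetric] finite_atLeastAtMost_int)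
  then show "diff_op_action n a f x = diff_op_action N (\<lambda>k x. if k \<in> {-int n..int n} then a k x else 0) f x"
    unfolding diff_op_action_def by (auto intro: sum.cong)
qed

lemma diff_ops_common_order:
  assumes "A \<in> diff_ops" "B \<in> diff_ops"
  obtains N a b where "A = diff_op_action N a" "B = diff_op_action N b"
proof -
  obtain n a where A: "A = diff_op_action n a" using assms(1) unfolding diff_ops_def by blast
  obtain m b where B: "B = diff_op_action m b" using assms(2) unfolding diff_ops_def by blast
  show thesis
    using that A B diff_op_action_pad[of n "max n m" a] diff_op_action_pad[of m "max n m" b] by auto
qed

lemma op_add_in_diff_ops:
  assumes "A \<in> diff_ops" "B \<in> diff_ops"
  shows "op_add A B \<in> diff_ops"
proof -
  obtain N a b where AB: "A = diff_op_action N a" "B = diff_op_action N b"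
    using diff_ops_common_order[OF assms] .
  have "op_add A B = diff_op_action N (\<lambda>k x. a k x + b k x)"
    unfolding AB op_add_def diff_op_action_def by (simp add: sum.distrib distrib_right)
  then show ?thesis by (simp add: diff_op_action_in_diff_ops)
qed

lemma op_scale_in_diff_ops:
  assumes "A \<in> diff_ops"
  shows "op_scale c A \<in> diff_ops"
proof -
  obtain n a where A: "A = diff_op_action n a" using assms unfolding diff_ops_def by blast
  have "op_scale c A = diff_op_action n (\<lambda>k x. c * a k x)"
    unfolding A op_scale_def diff_op_action_def by (simp add: sum_distrib_left mult.assoc)
  then show ?thesis by (simp add: diff_op_action_in_diff_ops)
qed

lemma comp_in_diff_ops:
  assumes "A \<in> diff_ops" "B \<in> diff_ops"
  shows "A \<circ> B \<in> diff_ops"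
proof -
  obtain n1 a1 where A: "A = diff_op_action n1 a1" using assms(1) unfolding diff_ops_def by blast
  obtain n2 a2 where B: "B = diff_op_action n2 a2" using assms(2) unfolding diff_ops_def by blast
  let ?I1 = "{-int n1..int n1}" and ?I2 = "{-int n2..int n2}" and ?I = "{-int (n1 + n2)..int (n1 + n2)}"
  \<comment> \<open>The shift by \<open>m\<close> collects all pairs of shifts with \<open>k + j = m\<close>; \<open>p\<close> vanishes when
    the intermediate point \<open>x + k\<close> is negative.\<close>
  define p where "p x k j = (if int x + k < 0 then 0 else a1 k x * a2 j (nat (int x + k)))" for x k j
  define c where "c m x = (\<Sum>k\<in>?I1. \<Sum>j\<in>?I2. if k + j = m then p x k j else 0)" for m x
  have "A \<circ> B = diff_op_action (n1 + n2) c"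
  proof (intro ext)
    fix f x
    have inner: "a1 k x * ext0 (B f) (int x + k) = (\<Sum>j\<in>?I2. p x k j * ext0 f (int x + k + j))" for k
      unfolding B p_def ext0_def[of "diff_op_action n2 a2 f"] diff_op_action_def
      by (auto simp: sum_distrib_left mult.assoc)
    have "(A \<circ> B) f x = (\<Sum>k\<in>?I1. \<Sum>j\<in>?I2. p x k j * ext0 f (int x + k + j))"
      unfolding A comp_def diff_op_action_def[of n1] using inner by (simp add: B)
    also have "\<dots> = (\<Sum>k\<in>?I1. \<Sum>j\<in>?I2. \<Sum>m\<in>?I. if k + j = m then p x k j * ext0 f (int x + m) else 0)"
    proof (intro sum.cong refl)
      fix k j assume "k \<in> ?I1" "j \<in> ?I2"
      then have "k + j \<in> ?I" by auto
      then show "p x k j * ext0 f (int x + k + j)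
          = (\<Sum>m\<in>?I. if k + j = m then p x k j * ext0 f (int x + m) else 0)"
        by (simp add: add.assoc)
    qed
    also have "\<dots> = (\<Sum>m\<in>?I. \<Sum>k\<in>?I1. \<Sum>j\<in>?I2. if k + j = m then p x k j * ext0 f (int x + m) else 0)"
      by (subst sum.swap, rule sum.cong[OF refl], rule sum.swap)
    also have "\<dots> = diff_op_action (n1 + n2) c f x"
      unfolding diff_op_action_def c_def sum_distrib_right by (intro sum.cong refl) simp
    finally show "(A \<circ> B) f x = diff_op_action (n1 + n2) c f x" .
  qed
  then show ?thesis by (simp add: diff_op_action_in_diff_ops)
qed

lemma diff_op_sum:
  assumes "L \<in> diff_ops"
  shows "L (\<lambda>x. \<Sum>j\<in>J. c j * g j x) x = (\<Sum>j\<in>J. c j * L (g j) x)"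
proof -
  obtain n a where "L = diff_op_action n a" using assms unfolding diff_ops_def by blast
  moreover have "ext0 (\<lambda>x. \<Sum>j\<in>J. c j * g j x) i = (\<Sum>j\<in>J. c j * ext0 (g j) i)" for i
    unfolding ext0_def by simp
  ultimately show ?thesis
    unfolding diff_op_action_def by (simp add: sum_distrib_left mult.left_commute sum.swap[of _ J])
qed

definition total_family :: "(nat \<Rightarrow> nat \<Rightarrow> real) \<Rightarrow> bool" where
  "total_family v \<longleftrightarrow>
     (\<forall>J d. finite J \<longrightarrow> (\<forall>x. (\<Sum>j\<in>J. d j * v x j) = 0) \<longrightarrow> (\<forall>j\<in>J. d j = 0))"

lemma total_familyI:
  assumes pivot: "\<And>S. finite S \<Longrightarrow> S \<noteq> {} \<Longrightarrow> \<exists>m\<in>S. v m m \<noteq> 0 \<and> (\<forall>j\<in>S - {m}. v m j = 0)"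
  shows "total_family v"
  unfolding total_family_def
proof (intro allI impI ballI, rule ccontr)
  fix J d j
  assume J: "finite J" and vanish: "\<forall>x. (\<Sum>j\<in>J. d j * v x j) = 0" and "j \<in> J" "d j \<noteq> 0"
  define S where "S = {j\<in>J. d j \<noteq> 0}"
  have "finite S" "S \<noteq> {}" using J \<open>j \<in> J\<close> \<open>d j \<noteq> 0\<close> unfolding S_def by auto
  then obtain m where m: "m \<in> S" "v m m \<noteq> 0" and off_diag: "\<forall>j\<in>S - {m}. v m j = 0"
    using pivot by blast
  have "(\<Sum>j\<in>J. d j * v m j) = d m * v m m + (\<Sum>j\<in>J - {m}. d j * v m j)"
    using J m(1) unfolding S_def by (auto intro: sum.remove)
  also have "(\<Sum>j\<in>J - {m}. d j * v m j) = 0"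
    using off_diag unfolding S_def by (intro sum.neutral) auto
  finally show False using vanish m unfolding S_def by simp
qed

lemma total_family_lower_triangular:
  assumes "\<And>x j. x < j \<Longrightarrow> v x j = 0" and "\<And>x. v x x \<noteq> 0"
  shows "total_family v"
proof (rule total_familyI)
  fix S :: "nat set" assume "finite S" "S \<noteq> {}"
  then show "\<exists>m\<in>S. v m m \<noteq> 0 \<and> (\<forall>j\<in>S - {m}. v m j = 0)"
    using assms by (intro bexI[of _ "Min S"]) (auto simp: order.not_eq_order_implies_strict)
qed

lemma total_family_upper_triangular:
  assumes "\<And>x j. j < x \<Longrightarrow> v x j = 0" and "\<And>x. v x x \<noteq> 0"
  shows "total_family v"
proof (rule total_familyI)
  fix S :: "nat set" assume "finite S" "S \<noteq> {}"
  then show "\<exists>m\<in>S. v m m \<noteq> 0 \<and> (\<forall>j\<in>S - {m}. v m j = 0)"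
    using assms by (intro bexI[of _ "Max S"]) (auto simp: order.not_eq_order_implies_strict)
qed

lemma diff_ops_eq_on_total_family:
  assumes "A \<in> diff_ops" "B \<in> diff_ops" and total: "total_family v" and eq: "\<And>x. A (v x) = B (v x)"
  shows "A = B"
proof (intro ext)
  fix f y
  obtain N a b where AB: "A = diff_op_action N a" "B = diff_op_action N b"
    using diff_ops_common_order[OF assms(1,2)] .
  define d where "d j = a (int j - int y) y - b (int j - int y) y" for j
  have diff: "A g y - B g y = (\<Sum>j\<in>{y - N..y + N}. d j * g j)" for g
    unfolding AB diff_op_action_window d_def by (simp add: sum_subtractf left_diff_distrib)
  have "(\<Sum>j\<in>{y - N..y + N}. d j * v x j) = 0" for x
    by (simp add: diff[symmetric] eq)
  then have "\<forall>j\<in>{y - N..y + N}. d j = 0"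
    using total unfolding total_family_def by blast
  then show "A f y = B f y" using diff[of f] by simp
qed

lemma total_family_psi: "total_family psi"
  by (rule total_family_lower_triangular) (simp_all add: psi_def)

lemma total_family_psi_transpose: "total_family (\<lambda>y x. psi x y)"
  by (rule total_family_upper_triangular) (simp_all add: psi_def)

lemma intertwines_right_unique:
  assumes "R1 \<in> diff_ops" "R2 \<in> diff_ops" "intertwines L R1" "intertwines L R2"
  shows "R1 = R2"
  by (rule diff_ops_eq_on_total_family[OF assms(1,2) total_family_psi])
     (use assms(3,4) in \<open>auto simp: intertwines_def\<close>)

lemma intertwines_left_unique:
  assumes "L1 \<in> diff_ops" "L2 \<in> diff_ops" "intertwines L1 R" "intertwines L2 R"
  shows "L1 = L2"
  by (rule diff_ops_eq_on_total_family[OF assms(1,2) total_family_psi_transpose])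
     (use assms(3,4) in \<open>auto simp: intertwines_def\<close>)

lemma intertwines_op_add:
  "intertwines L1 R1 \<Longrightarrow> intertwines L2 R2 \<Longrightarrow> intertwines (op_add L1 L2) (op_add R1 R2)"
  by (simp add: intertwines_def op_add_def)

lemma intertwines_op_scale: "intertwines L R \<Longrightarrow> intertwines (op_scale c L) (op_scale c R)"
  by (simp add: intertwines_def op_scale_def)

lemma intertwines_comp:
  assumes "L1 \<in> diff_ops" "R2 \<in> diff_ops" and I1: "intertwines L1 R1" and I2: "intertwines L2 R2"
  shows "intertwines (L1 \<circ> L2) (R2 \<circ> R1)"
  unfolding intertwines_def
proof (intro allI)
  fix x y
  obtain m b where R2: "R2 = diff_op_action m b" using assms(2) unfolding diff_ops_def by blast
  let ?W = "{y - m..y + m}" and ?b = "\<lambda>j. b (int j - int y) y"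
  have "L2 (\<lambda>x'. psi x' y) = (\<lambda>x'. \<Sum>j\<in>?W. ?b j * psi x' j)"
    using I2 unfolding intertwines_def R2 diff_op_action_window by auto
  then have "(L1 \<circ> L2) (\<lambda>x'. psi x' y) x = L1 (\<lambda>x'. \<Sum>j\<in>?W. ?b j * psi x' j) x"
    by simp
  also have "\<dots> = (\<Sum>j\<in>?W. ?b j * L1 (\<lambda>x'. psi x' j) x)"
    by (rule diff_op_sum[OF assms(1)])
  also have "\<dots> = (\<Sum>j\<in>?W. ?b j * R1 (\<lambda>y'. psi x y') j)"
    using I1 unfolding intertwines_def by simp
  also have "\<dots> = (R2 \<circ> R1) (\<lambda>y'. psi x y') y"
    unfolding R2 diff_op_action_window by simp
  finally show "(L1 \<circ> L2) (\<lambda>x'. psi x' y) x = (R2 \<circ> R1) (\<lambda>y'. psi x y') y" .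
qed

lemma Fx_unique_intertwiner: "L \<in> Fx \<Longrightarrow> \<exists>!R. R \<in> diff_ops \<and> intertwines L R"
  unfolding Fx_def using intertwines_right_unique by blast

lemma b_psi_intertwines:
  assumes "L \<in> Fx"
  shows "b_psi L \<in> diff_ops" "intertwines L (b_psi L)"
  using theI'[OF Fx_unique_intertwiner[OF assms]] unfolding b_psi_def by auto

lemma b_psi_eqI:
  assumes "L \<in> diff_ops" "R \<in> diff_ops" "intertwines L R"
  shows "L \<in> Fx" "b_psi L = R"
proof -
  show L: "L \<in> Fx" using assms unfolding Fx_def by blast
  show "b_psi L = R"
    unfolding b_psi_def by (rule the1_equality[OF Fx_unique_intertwiner[OF L]]) (use assms in auto)
qed

lemma Fx_diff_ops: "L \<in> Fx \<Longrightarrow> L \<in> diff_ops"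
  unfolding Fx_def by blast

lemma bij_betw_b_psi: "bij_betw b_psi Fx Fy"
proof (rule bij_betw_imageI)
  show "inj_on b_psi Fx"
  proof (rule inj_onI)
    fix L1 L2 assume L: "L1 \<in> Fx" "L2 \<in> Fx" and "b_psi L1 = b_psi L2"
    then have "intertwines L2 (b_psi L1)" using b_psi_intertwines(2)[OF L(2)] by simp
    then show "L1 = L2"
      using intertwines_left_unique Fx_diff_ops L b_psi_intertwines(2)[OF L(1)] by blast
  qed
  show "b_psi ` Fx = Fy"
  proof
    show "b_psi ` Fx \<subseteq> Fy"
      using b_psi_intertwines Fx_diff_ops unfolding Fy_def by blast
    show "Fy \<subseteq> b_psi ` Fx"
    proof
      fix R assume "R \<in> Fy"
      then obtain L where "L \<in> diff_ops" "R \<in> diff_ops" "intertwines L R" unfolding Fy_def by blast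
      from b_psi_eqI[OF this] show "R \<in> b_psi ` Fx" by blast
    qed
  qed
qed

lemma b_psi_op_add:
  assumes "L1 \<in> Fx" "L2 \<in> Fx"
  shows "op_add L1 L2 \<in> Fx" "b_psi (op_add L1 L2) = op_add (b_psi L1) (b_psi L2)"
proof -
  have "op_add L1 L2 \<in> diff_ops" "op_add (b_psi L1) (b_psi L2) \<in> diff_ops"
    "intertwines (op_add L1 L2) (op_add (b_psi L1) (b_psi L2))"
    using assms by (simp_all add: Fx_diff_ops b_psi_intertwines op_add_in_diff_ops intertwines_op_add)
  then show "op_add L1 L2 \<in> Fx" "b_psi (op_add L1 L2) = op_add (b_psi L1) (b_psi L2)"
    by (rule b_psi_eqI)+
qed

lemma b_psi_op_scale:
  assumes "L \<in> Fx"
  shows "op_scale c L \<in> Fx" "b_psi (op_scale c L) = op_scale c (b_psi L)"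
proof -
  have "op_scale c L \<in> diff_ops" "op_scale c (b_psi L) \<in> diff_ops"
    "intertwines (op_scale c L) (op_scale c (b_psi L))"
    using assms by (simp_all add: Fx_diff_ops b_psi_intertwines op_scale_in_diff_ops intertwines_op_scale)
  then show "op_scale c L \<in> Fx" "b_psi (op_scale c L) = op_scale c (b_psi L)"
    by (rule b_psi_eqI)+
qed

lemma b_psi_comp:
  assumes "L1 \<in> Fx" "L2 \<in> Fx"
  shows "L1 \<circ> L2 \<in> Fx" "b_psi (L1 \<circ> L2) = b_psi L2 \<circ> b_psi L1"
proof -
  have "L1 \<circ> L2 \<in> diff_ops" "b_psi L2 \<circ> b_psi L1 \<in> diff_ops"
    "intertwines (L1 \<circ> L2) (b_psi L2 \<circ> b_psi L1)"
    using assms by (simp_all add: Fx_diff_ops b_psi_intertwines comp_in_diff_ops intertwines_comp)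
  then show "L1 \<circ> L2 \<in> Fx" "b_psi (L1 \<circ> L2) = b_psi L2 \<circ> b_psi L1"
    by (rule b_psi_eqI)+
qed

theorem mainTheorem2:
  shows "(\<forall>L \<in> Fx. \<exists>!R. R \<in> diff_ops \<and> intertwines L R)
    \<and> bij_betw b_psi Fx Fy
    \<and> (\<forall>L1 \<in> Fx. \<forall>L2 \<in> Fx. op_add L1 L2 \<in> Fx \<and> b_psi (op_add L1 L2) = op_add (b_psi L1) (b_psi L2))
    \<and> (\<forall>c. \<forall>L \<in> Fx. op_scale c L \<in> Fx \<and> b_psi (op_scale c L) = op_scale c (b_psi L))
    \<and> (\<forall>L1 \<in> Fx. \<forall>L2 \<in> Fx. L1 \<circ> L2 \<in> Fx \<and> b_psi (L1 \<circ> L2) = b_psi L2 \<circ> b_psi L1)"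
  by (simp add: Fx_unique_intertwiner bij_betw_b_psi b_psi_op_add b_psi_op_scale b_psi_comp)

end
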